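(* Let $\mathbb F$ be a field of characteristic $0$ and $A=\mathbb F[x,y,u,v]/\langle(1-x^2)(1-y^2)-(u^2+v^2)\rangle$. Let $$N=\begin{pmatrix}-u&v&1-x^2&0\\-v&-u&0&1-x^2\\1-y^2&0&-u&-v\\0&1-y^2&v&-u\end{pmatrix},\qquad M=\begin{pmatrix}u&v&1-x^2&0\\-v&u&0&1-x^2\\1-y^2&0&u&-v\\0&1-y^2&v&u\end{pmatrix},$$ viewed as $A$-linear maps $A^4\to A^4$. Then the kernel of $N$ equals the $A$-submodule of $A^4$ generated by the columns of $M$. *)

theory Defs
  imports "HOL-Computational_Algebra.Polynomial"
begin

text \<open>The polynomial ring F[x,y,u,v], realised as iterated univariate polynomials
  F[x][y][u][v]: the innermost variable is x, then y, then u, the outermost is v.\<close>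
type_synonym 'a mpoly4 = "'a poly poly poly poly"

definition X :: "'a::field_char_0 mpoly4" where "X = [:[:[:monom 1 1:]:]:]"
definition Y :: "'a::field_char_0 mpoly4" where "Y = [:[:monom 1 1:]:]"
definition U :: "'a::field_char_0 mpoly4" where "U = [:monom 1 1:]"
definition V :: "'a::field_char_0 mpoly4" where "V = monom 1 1"

definition frel :: "'a::field_char_0 mpoly4" where
  "frel = (1 - X^2) * (1 - Y^2) - (U^2 + V^2)"

definition Nmat :: "nat \<Rightarrow> nat \<Rightarrow> 'a::field_char_0 mpoly4" where
  "Nmat i j = [[-U, V, 1 - X^2, 0],
               [-V, -U, 0, 1 - X^2],
               [1 - Y^2, 0, -U, -V],
               [0, 1 - Y^2, V, -U]] ! i ! j"

definition Mmat :: "nat \<Rightarrow> nat \<Rightarrow> 'a::field_char_0 mpoly4" where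
  "Mmat i j = [[U, V, 1 - X^2, 0],
               [-V, U, 0, 1 - X^2],
               [1 - Y^2, 0, U, -V],
               [0, 1 - Y^2, V, U]] ! i ! j"

text \<open>Elements of A^4 are represented by vectors w (components w 0..w 3) over F[x,y,u,v];
  two representatives are equal in A^4 iff componentwise congruent modulo frel.\<close>

definition in_ker_N :: "(nat \<Rightarrow> 'a::field_char_0 mpoly4) \<Rightarrow> bool" where
  "in_ker_N w \<longleftrightarrow> (\<forall>i<4. frel dvd (\<Sum>j<4. Nmat i j * w j))"

definition in_col_span_M :: "(nat \<Rightarrow> 'a::field_char_0 mpoly4) \<Rightarrow> bool" where
  "in_col_span_M w \<longleftrightarrow>
     (\<exists>c :: nat \<Rightarrow> 'a mpoly4. \<forall>i<4. frel dvd (w i - (\<Sum>j<4. Mmat i j * c j)))"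

end

theory Submission
  imports Defs
begin

text \<open>
  The pair (N, M) is a matrix factorization of the relation f = (1-x^2)(1-y^2) - (u^2+v^2):
  both products N M and M N equal f times the identity matrix.  For any such factorization
  A B = B A = f I over an integral domain with f \<noteq> 0, the kernel of A acting on (R/f)^n
  is exactly the column span of B over R/f:
    - if A w = f z, then f w = B (A w) = f (B z), and cancelling f gives w = B z;
    - if w = B c + f d, then A w = (A B) c + f (A d) = f (c + A d) \<equiv> 0 mod f.
\<close>

definition matvec :: "nat \<Rightarrow> (nat \<Rightarrow> nat \<Rightarrow> 'a::comm_semiring_0) \<Rightarrow> (nat \<Rightarrow> 'a) \<Rightarrow> nat \<Rightarrow> 'a"
  where "matvec n A v i = (\<Sum>j<n. A i j * v j)"

definition matrix_factorization ::
    "nat \<Rightarrow> 'a::comm_semiring_0 \<Rightarrow> (nat \<Rightarrow> nat \<Rightarrow> 'a) \<Rightarrow> (nat \<Rightarrow> nat \<Rightarrow> 'a) \<Rightarrow> bool"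
  where "matrix_factorization n f A B \<longleftrightarrow>
           (\<forall>i<n. \<forall>k<n. (\<Sum>j<n. A i j * B j k) = (if i = k then f else 0))"

lemma matvec_matvec_factorization:
  assumes "matrix_factorization n f A B" and "i < n"
  shows "matvec n A (matvec n B v) i = f * v i"
proof -
  have "matvec n A (matvec n B v) i = (\<Sum>k<n. (\<Sum>j<n. A i j * B j k) * v k)"
    unfolding matvec_def sum_distrib_left sum_distrib_right mult.assoc by (rule sum.swap)
  also have "\<dots> = (\<Sum>k<n. (if i = k then f else 0) * v k)"
    using assms unfolding matrix_factorization_def by (intro sum.cong) auto
  also have "\<dots> = f * v i"
    using \<open>i < n\<close> by (simp add: if_distrib[of "\<lambda>x. x * y" for y] cong: if_cong)
  finally show ?thesis .
qed

lemma matvec_add_smult: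
  "matvec n A (\<lambda>j. c j + f * d j) i = matvec n A c i + f * matvec n A d i"
  unfolding matvec_def by (simp add: algebra_simps sum.distrib sum_distrib_left)

lemma matvec_cong:
  assumes "\<And>j. j < n \<Longrightarrow> v j = v' j"
  shows "matvec n A v i = matvec n A v' i"
  unfolding matvec_def using assms by (intro sum.cong) auto

theorem kernel_eq_column_span_mod:
  fixes f :: "'a::idom"
  assumes "f \<noteq> 0"
    and AB: "matrix_factorization n f A B"
    and BA: "matrix_factorization n f B A"
  shows "(\<forall>i<n. f dvd matvec n A w i) \<longleftrightarrow> (\<exists>c. \<forall>i<n. f dvd (w i - matvec n B c i))"
proof
  assume "\<forall>i<n. f dvd matvec n A w i"
  then obtain z where z: "\<And>j. j < n \<Longrightarrow> matvec n A w j = f * z j"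
    unfolding dvd_def by metis
  have "w i = matvec n B z i" if "i < n" for i
  proof -
    have "f * w i = matvec n B (matvec n A w) i"
      using matvec_matvec_factorization[OF BA that] by simp
    also have "\<dots> = matvec n B (\<lambda>j. f * z j) i"
      using z by (rule matvec_cong)
    also have "\<dots> = f * matvec n B z i"
      unfolding matvec_def by (simp add: sum_distrib_left mult.left_commute)
    finally show ?thesis using \<open>f \<noteq> 0\<close> by simp
  qed
  then show "\<exists>c. \<forall>i<n. f dvd (w i - matvec n B c i)"
    by (intro exI[of _ z]) simp
next
  assume "\<exists>c. \<forall>i<n. f dvd (w i - matvec n B c i)"
  then obtain c where "\<forall>i<n. f dvd (w i - matvec n B c i)" by blast
  then obtain d where d_diff: "\<And>j. j < n \<Longrightarrow> w j - matvec n B c j = f * d j"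
    unfolding dvd_def by metis
  have d: "w j = matvec n B c j + f * d j" if "j < n" for j
    using d_diff[OF that] by (metis diff_eq_eq add.commute)
  have "matvec n A w i = f * (c i + matvec n A d i)" if "i < n" for i
  proof -
    have "matvec n A w i = matvec n A (\<lambda>j. matvec n B c j + f * d j) i"
      using d by (rule matvec_cong)
    also have "\<dots> = f * c i + f * matvec n A d i"
      using matvec_matvec_factorization[OF AB that] by (simp add: matvec_add_smult)
    finally show ?thesis by (simp add: distrib_left)
  qed
  then show "\<forall>i<n. f dvd matvec n A w i" by auto
qed

lemma sum_lessThan_4: "(\<Sum>j<(4::nat). g j) = g 0 + g 1 + g 2 + g 3"
  by (simp add: eval_nat_numeral add.assoc)

lemma all_lessThan_4: "(\<forall>i<(4::nat). P i) \<longleftrightarrow> P 0 \<and> P 1 \<and> P 2 \<and> P 3"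
  by (auto simp: eval_nat_numeral less_Suc_eq)

text \<open>frel is a nonzero polynomial: as a polynomial in v its leading coefficient is -1.\<close>
lemma frel_nonzero: "(frel :: 'a::field_char_0 mpoly4) \<noteq> 0"
proof
  assume "(frel :: 'a mpoly4) = 0"
  moreover have "coeff (frel :: 'a mpoly4) 2 = -1"
    unfolding frel_def X_def Y_def U_def V_def
    by (simp add: coeff_mult power2_eq_square monom_0 numeral_2_eq_2 coeff_monom_mult mult_monom)
  ultimately show False by simp
qed

text \<open>The common shape of N and M: for p = 1-x^2, q = 1-y^2 we have N = qmat p q u v and
  M = qmat p q (-u) v, so M is obtained from N by the substitution u \<mapsto> -u.\<close>
definition qmat :: "'a::comm_ring_1 \<Rightarrow> 'a \<Rightarrow> 'a \<Rightarrow> 'a \<Rightarrow> nat \<Rightarrow> nat \<Rightarrow> 'a" where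
  "qmat p q u v i j = [[-u, v, p, 0],
                       [-v, -u, 0, p],
                       [q, 0, -u, -v],
                       [0, q, v, -u]] ! i ! j"

text \<open>qmat(u) qmat(-u) = (p q - u^2 - v^2) I holds in every commutative ring; applied to u and
  to -u this yields both N M = frel I and M N = frel I.\<close>
lemma qmat_factorization:
  fixes p q u v :: "'a::comm_ring_1"
  shows "matrix_factorization 4 (p * q - (u^2 + v^2)) (qmat p q u v) (qmat p q (-u) v)"
  unfolding matrix_factorization_def all_lessThan_4 sum_lessThan_4 qmat_def
  by (simp add: algebra_simps power2_eq_square)

lemma Nmat_eq_qmat: "Nmat = qmat (1 - X^2) (1 - Y^2) U V"
  by (intro ext) (simp add: Nmat_def qmat_def)

lemma Mmat_eq_qmat: "Mmat = qmat (1 - X^2) (1 - Y^2) (-U) V"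
  by (intro ext) (simp add: Mmat_def qmat_def)

lemma N_M_factorization: "matrix_factorization 4 (frel :: 'a::field_char_0 mpoly4) Nmat Mmat"
  unfolding Nmat_eq_qmat Mmat_eq_qmat frel_def by (rule qmat_factorization)

lemma M_N_factorization: "matrix_factorization 4 (frel :: 'a::field_char_0 mpoly4) Mmat Nmat"
  using qmat_factorization[of "1 - X^2" "1 - Y^2" "-U" V]
  unfolding Nmat_eq_qmat Mmat_eq_qmat frel_def by simp

theorem mainTheorem19:
  fixes w :: "nat \<Rightarrow> 'a::field_char_0 mpoly4"
  shows "in_ker_N w \<longleftrightarrow> in_col_span_M w"
proof -
  have "in_ker_N w \<longleftrightarrow> (\<forall>i<4. frel dvd matvec 4 Nmat w i)"
    by (simp add: in_ker_N_def matvec_def)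
  also have "\<dots> \<longleftrightarrow> (\<exists>c. \<forall>i<4. frel dvd (w i - matvec 4 Mmat c i))"
    by (rule kernel_eq_column_span_mod[OF frel_nonzero N_M_factorization M_N_factorization])
  also have "\<dots> \<longleftrightarrow> in_col_span_M w"
    by (simp add: in_col_span_M_def matvec_def)
  finally show ?thesis .
qed

end
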